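(* Let $M := \langle x,y,z \mid (xy,\, yzx)\rangle$. (1) For all $k,l\in\mathbb{N}^+$, $\mathsf{L}_M(x^ky^l) = [k+l,\ 2(k+l)-1]$. (2) For all $k,l\in\mathbb{N}^+$, $\rho(\mathsf{L}_M(x^ky^l)) = 2 - \frac{1}{k+l}$. (3) For every integer $n\ge 2$ and all $k,l\in\mathbb{N}^+$ with $k+l=n$, one has $\rho(\mathsf{L}_M(a)) \le \rho(\mathsf{L}_M(x^ky^l))$ for every word $a\in\langle x,y,z\rangle$ with $|a| = n$.
   Context: $\langle x,y,z\rangle$ is the free monoid on $\{x,y,z\}$, and $M$ is the monoid with generators $x,y,z$ subject to the single relation $xy = yzx$. $|a|$ is word length; $a=_M b$ means equal images in $M$; $\mathsf{L}_M(a):=\{|b| : b\in\langle x,y,z\rangle,\ b=_M a\}$. $[s,t]$ denotes the set of integers between $s$ and $t$. For $L\subseteq\mathbb{N}$ with $L\cap\mathbb{N}^+\neq\emptyset$, $\rho(L):=\sup(L\cap\mathbb{N}^+)/\min(L\cap\mathbb{N}^+)$. *)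

theory Defs
  imports Main "HOL-Library.Extended_Real"
begin

datatype letter = X | Y | Z

type_synonym word = "letter list"

definition step :: "(word \<times> word) set" where
  "step = {(u @ [X, Y] @ v, u @ [Y, Z, X] @ v) | u v. True}"

text \<open>Equality in M = <x,y,z | xy = yzx>: the congruence generated by the relation,
  i.e. the reflexive-symmetric-transitive closure of the elementary steps.\<close>
definition eqM :: "word \<Rightarrow> word \<Rightarrow> bool" where
  "eqM a b \<longleftrightarrow> (a, b) \<in> (step \<union> step\<inverse>)\<^sup>*"

definition LM :: "word \<Rightarrow> nat set" where
  "LM a = {length b | b. eqM b a}"

text \<open>Elasticity rho(L) = sup(L \<inter> N+) / min(L \<inter> N+), valued in the extended reals
  (the supremum may be infinite).\<close>
definition rho :: "nat set \<Rightarrow> ereal" where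
  "rho L = (SUP n\<in>L \<inter> {0<..}. ereal (real n)) / ereal (real (Inf (L \<inter> {0<..})))"

end

(*
  Cut a word at its letters z and, in each z-free block, take the core: the factor from the
  first x to the last y after it.  The weight of a word is the sum over its blocks of
  |core| - 1 (0 for an empty core).  Applying xy -> yzx inside a block u xy v adds one letter
  and splits the block into u y and x v, whose weights add up to one less than that of u xy v;
  so length + weight (the potential) is an invariant of M, and so are the numbers of x's and y's.
  As the weight of a word is less than its length, every length in L_M(a) is at most 2m - 1,
  where m = min L_M(a) <= |a|, which bounds the elasticity by 2 - 1/|a|.  Conversely, a word of
  positive weight contains a factor xy, so rewriting realises every length from |a| up to the
  potential of a; for x^k y^l the potential is 2(k+l) - 1 and the counts of x and y force every
  length to be at least k + l.
*)

theory Submission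
  imports Defs
begin

fun Z_segments :: "word \<Rightarrow> word list" where
  "Z_segments [] = [[]]"
| "Z_segments (c # w) =
     (if c = Z then [] # Z_segments w else (c # hd (Z_segments w)) # tl (Z_segments w))"

lemma Z_segments_not_Nil: "Z_segments w \<noteq> []"
  by (induction w) auto

lemma Z_segments_append_Z: "Z_segments (u @ Z # v) = Z_segments u @ Z_segments v"
proof (induction u)
  case (Cons c u)
  then show ?case using Z_segments_not_Nil[of u] by (cases "Z_segments u") auto
qed simp

lemma Z_segments_Z_free: "Z \<notin> set s \<Longrightarrow> Z_segments s = [s]"
  by (induction s) auto

lemma Z_split_induct [case_names Z_free append_Z]:
  assumes "\<And>s. Z \<notin> set s \<Longrightarrow> P s"
    and "\<And>u v. P u \<Longrightarrow> P v \<Longrightarrow> P (u @ Z # v)"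
  shows "P w"
proof (induction "length w" arbitrary: w rule: less_induct)
  case less
  show ?case
  proof (cases "Z \<in> set w")
    case True
    then obtain u v where "w = u @ Z # v" by (meson split_list)
    then show ?thesis using less assms(2) by simp
  qed (rule assms(1))
qed

definition xy_core :: "word \<Rightarrow> word" where
  "xy_core s = rev (dropWhile (\<lambda>c. c \<noteq> Y) (rev (dropWhile (\<lambda>c. c \<noteq> X) s)))"

definition seg_weight :: "word \<Rightarrow> nat" where
  "seg_weight s = length (xy_core s) - 1"

definition weight :: "word \<Rightarrow> nat" where
  "weight w = sum_list (map seg_weight (Z_segments w))"

definition potential :: "word \<Rightarrow> nat" where
  "potential w = length w + weight w"

lemma xy_core_factor: "\<exists>p q. s = p @ xy_core s @ q"
proof -
  let ?D = "dropWhile (\<lambda>c. c \<noteq> X) s"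
  let ?E = "dropWhile (\<lambda>c. c \<noteq> Y) (rev ?D)"
  have "s = takeWhile (\<lambda>c. c \<noteq> X) s @ ?D" by simp
  moreover have "?D = rev ?E @ rev (takeWhile (\<lambda>c. c \<noteq> Y) (rev ?D))"
    by (metis rev_append rev_rev_ident takeWhile_dropWhile_id)
  ultimately show ?thesis unfolding xy_core_def by (metis append.assoc)
qed

lemma xy_core_hd_last:
  assumes "xy_core s \<noteq> []"
  shows "hd (xy_core s) = X" and "last (xy_core s) = Y"
proof -
  let ?D = "dropWhile (\<lambda>c. c \<noteq> X) s"
  let ?E = "dropWhile (\<lambda>c. c \<noteq> Y) (rev ?D)"
  have E: "?E \<noteq> []" using assms by (simp add: xy_core_def)
  then show "last (xy_core s) = Y"
    unfolding xy_core_def last_rev using hd_dropWhile[OF E] by blast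
  obtain t where D: "?D = rev ?E @ t"
    by (metis rev_append rev_rev_ident takeWhile_dropWhile_id)
  then have "?D \<noteq> []" using E by (metis Nil_is_append_conv Nil_is_rev_conv)
  then have "hd ?D = X" using hd_dropWhile by blast
  moreover have "hd ?D = hd (rev ?E)" using D E by (metis hd_append2 Nil_is_rev_conv)
  ultimately show "hd (xy_core s) = X" by (simp add: xy_core_def)
qed

lemma length_xy_core_XY:
  "length (xy_core (u @ X # Y # v)) =
     length (dropWhile (\<lambda>c. c \<noteq> X) u) + 2 + length (dropWhile (\<lambda>c. c \<noteq> Y) (rev v))"
  by (simp add: xy_core_def dropWhile_append)

lemma length_xy_core_snoc_Y:
  "length (xy_core (u @ [Y])) = (if X \<in> set u then length (dropWhile (\<lambda>c. c \<noteq> X) u) + 1 else 0)"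
  by (auto simp add: xy_core_def dropWhile_append)

lemma length_xy_core_Cons_X:
  "length (xy_core (X # v)) = (if Y \<in> set v then length (dropWhile (\<lambda>c. c \<noteq> Y) (rev v)) + 1 else 0)"
  by (auto simp add: xy_core_def dropWhile_append)

lemma seg_weight_XY: "seg_weight (u @ X # Y # v) = Suc (seg_weight (u @ [Y]) + seg_weight (X # v))"
  by (auto simp add: seg_weight_def length_xy_core_XY length_xy_core_snoc_Y length_xy_core_Cons_X)

lemma seg_weight_le_length: "seg_weight s \<le> length s - 1"
proof -
  obtain p q where "s = p @ xy_core s @ q" using xy_core_factor by blast
  then have "length s = length p + length (xy_core s) + length q" by (metis length_append add.assoc)
  then show ?thesis by (simp add: seg_weight_def)
qed

lemma weight_append_Z: "weight (u @ Z # v) = weight u + weight v"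
  by (simp add: weight_def Z_segments_append_Z)

lemma weight_Z_free: "Z \<notin> set s \<Longrightarrow> weight s = seg_weight s"
  by (simp add: weight_def Z_segments_Z_free)

lemma weight_Nil [simp]: "weight [] = 0"
  by (simp add: weight_Z_free seg_weight_def xy_core_def)

lemma weight_Cons_Z [simp]: "weight (Z # w) = weight w"
  using weight_append_Z[of "[]"] by simp

lemma weight_snoc_Z [simp]: "weight (w @ [Z]) = weight w"
  using weight_append_Z[of _ "[]"] by simp

(* Wrapping the word in z's does not change its weight and puts a z on the far side of the
   blocks that meet m. *)
lemma weight_in_context:
  obtains u0 v0 c where "Z \<notin> set u0" "Z \<notin> set v0"
    "\<And>m. weight (u @ m @ v) = c + weight (u0 @ m @ v0)"
proof -
  obtain u1 u0 where u: "Z # u = u1 @ Z # u0" "Z \<notin> set u0"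
    using split_list_last[of Z "Z # u"] by auto
  obtain v0 v1 where v: "v @ [Z] = v0 @ Z # v1" "Z \<notin> set v0"
    using split_list_first[of Z "v @ [Z]"] by auto
  have "weight (u @ m @ v) = weight u1 + weight v1 + weight (u0 @ m @ v0)" for m
  proof -
    have "weight (u @ m @ v) = weight (Z # u @ m @ v @ [Z])" by (simp flip: append_assoc)
    also have "Z # u @ m @ v @ [Z] = u1 @ Z # ((u0 @ m @ v0) @ Z # v1)"
      by (metis u(1) v(1) append_Cons append.assoc)
    also have "weight \<dots> = weight u1 + (weight (u0 @ m @ v0) + weight v1)"
      by (simp only: weight_append_Z)
    finally show ?thesis by simp
  qed
  then show ?thesis using that u(2) v(2) by blast
qed

lemma weight_step: "weight (u @ [X, Y] @ v) = Suc (weight (u @ [Y, Z, X] @ v))"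
proof -
  obtain u0 v0 c where free: "Z \<notin> set u0" "Z \<notin> set v0"
    and ctx: "\<And>m. weight (u @ m @ v) = c + weight (u0 @ m @ v0)"
    using weight_in_context[of u v] by blast
  have "weight (u0 @ [Y, Z, X] @ v0) = weight ((u0 @ [Y]) @ Z # X # v0)" by simp
  also have "\<dots> = seg_weight (u0 @ [Y]) + seg_weight (X # v0)"
    by (simp only: weight_append_Z) (simp add: weight_Z_free free)
  finally show ?thesis unfolding ctx using free by (simp add: weight_Z_free seg_weight_XY)
qed

lemma weight_le_length: "weight w \<le> length w - 1"
proof (induction w rule: Z_split_induct)
  case (Z_free s)
  then show ?case using seg_weight_le_length by (simp add: weight_Z_free)
qed (simp add: weight_append_Z)

lemma XY_factor_if_hd_X_last_Y:
  "Z \<notin> set w \<Longrightarrow> w \<noteq> [] \<Longrightarrow> hd w = X \<Longrightarrow> last w = Y \<Longrightarrow> \<exists>u v. w = u @ [X, Y] @ v"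
proof (induction w)
  case (Cons c w)
  then have "w \<noteq> []" by auto
  then consider "hd w = X" | "hd w = Y"
    using Cons.prems(1) hd_in_set[of w] by (cases "hd w") auto
  then show ?case
  proof cases
    case 1
    then obtain u v where "w = u @ [X, Y] @ v" using Cons \<open>w \<noteq> []\<close> by auto
    then show ?thesis using Cons.prems(3) by (metis append_Cons list.sel(1))
  next
    case 2
    then show ?thesis using Cons.prems(3) \<open>w \<noteq> []\<close>
      by (metis append_Cons append_Nil list.collapse list.sel(1))
  qed
qed simp

lemma XY_factor_of_weight_pos: "0 < weight w \<Longrightarrow> \<exists>u v. w = u @ [X, Y] @ v"
proof (induction w rule: Z_split_induct)
  case (Z_free s)
  then have "2 \<le> length (xy_core s)" by (simp add: weight_Z_free seg_weight_def)
  moreover obtain p q where s: "s = p @ xy_core s @ q" using xy_core_factor by blast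
  ultimately obtain u v where "xy_core s = u @ [X, Y] @ v"
    using XY_factor_if_hd_X_last_Y[of "xy_core s"] xy_core_hd_last[of s] Z_free.hyps
    by (metis Un_iff list.size(3) not_numeral_le_zero set_append)
  then show ?case using s by (metis append.assoc)
next
  case (append_Z u v)
  then show ?case by (auto simp: weight_append_Z) (metis append.assoc append_Cons)+
qed

lemma weight_replicate_XY:
  assumes "0 < k" "0 < l"
  shows "weight (replicate k X @ replicate l Y) = k + l - 1"
proof -
  let ?w = "replicate k X @ replicate l Y"
  obtain k' l' where k: "k = Suc k'" and l: "l = Suc l'" using assms by (metis gr0_implies_Suc)
  have from_X: "dropWhile (\<lambda>c. c \<noteq> X) ?w = ?w" using k by simp
  have rev_w: "rev ?w = Y # replicate l' Y @ replicate k X"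
    using l by (simp add: replicate_append_same)
  have "dropWhile (\<lambda>c. c \<noteq> Y) (rev ?w) = rev ?w" unfolding rev_w by simp
  then have "xy_core ?w = ?w" unfolding xy_core_def from_X by simp
  then show ?thesis by (simp add: weight_Z_free seg_weight_def)
qed

lemma eqM_refl: "eqM a a"
  by (simp add: eqM_def)

lemma eqM_sym: "eqM a b \<Longrightarrow> eqM b a"
  unfolding eqM_def by (meson sym_Un_converse sym_rtrancl symD)

lemma eqM_trans: "eqM a b \<Longrightarrow> eqM b c \<Longrightarrow> eqM a c"
  unfolding eqM_def by (rule rtrancl_trans)

lemma eqM_step: "eqM (u @ [X, Y] @ v) (u @ [Y, Z, X] @ v)"
  unfolding eqM_def step_def by blast

lemma eqM_invariant:
  assumes "\<And>a b. (a, b) \<in> step \<Longrightarrow> f a = f b" and "eqM a b"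
  shows "f a = f b"
  using assms(2) unfolding eqM_def
  by (induction rule: rtrancl_induct) (auto dest: assms(1))

lemma potential_eqM: "eqM a b \<Longrightarrow> potential a = potential b"
  by (rule eqM_invariant) (auto simp: step_def potential_def weight_step[simplified])

lemma count_list_eqM: "c \<noteq> Z \<Longrightarrow> eqM a b \<Longrightarrow> count_list a c = count_list b c"
  by (rule eqM_invariant) (auto simp: step_def)

lemma LM_eqM: "eqM a b \<Longrightarrow> LM a = LM b"
  unfolding LM_def by (meson eqM_sym eqM_trans)

lemma length_in_LM: "length a \<in> LM a"
  unfolding LM_def using eqM_refl by blast

lemma LM_le_potential:
  assumes "n \<in> LM a" shows "n \<le> potential a"
proof -
  obtain b where "eqM b a" "n = length b" using assms by (auto simp: LM_def)
  then show ?thesis using potential_eqM[of b a] by (simp add: potential_def)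
qed

lemma potential_le_LM:
  assumes "n \<in> LM a" shows "potential a \<le> 2 * n - 1"
proof -
  obtain b where "eqM b a" "n = length b" using assms by (auto simp: LM_def)
  then show ?thesis using potential_eqM[of b a] weight_le_length[of b] by (simp add: potential_def)
qed

lemma count_XY_le_LM:
  assumes "n \<in> LM a" shows "count_list a X + count_list a Y \<le> n"
proof -
  obtain b where b: "eqM b a" "n = length b" using assms by (auto simp: LM_def)
  have "count_list b X + count_list b Y \<le> length b" by (induction b) auto
  then show ?thesis using b count_list_eqM[OF _ b(1)] by simp
qed

lemma finite_LM: "finite (LM a)"
  using LM_le_potential by (meson finite_atMost finite_subset subsetI atMost_iff)

lemma length_potential_interval_subset_LM: "{length a .. potential a} \<subseteq> LM a"
proof (induction "weight a" arbitrary: a)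
  case 0
  then show ?case using length_in_LM by (simp add: potential_def)
next
  case (Suc w)
  then obtain u v where a: "a = u @ [X, Y] @ v" using XY_factor_of_weight_pos by force
  define b where "b = u @ [Y, Z, X] @ v"
  have "weight b = w" using Suc.hyps(2) weight_step by (simp add: a b_def)
  then have "{length b .. potential b} \<subseteq> LM b" by (rule Suc.hyps(1)[OF sym])
  moreover have "LM b = LM a" "potential b = potential a"
    using eqM_step[of u v] LM_eqM potential_eqM by (simp_all add: a b_def)
  moreover have "length b = Suc (length a)" by (simp add: a b_def)
  moreover have "{length a .. potential a} = insert (length a) {Suc (length a) .. potential a}"
    by (simp add: Icc_eq_insert_lb_nat potential_def)
  ultimately show ?case using length_in_LM[of a] by simp
qed

lemma rho_eq_Max_div_Min:
  assumes "finite L" "L \<noteq> {}" "0 \<notin> L"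
  shows "rho L = ereal (real (Max L) / real (Min L))"
proof -
  have L: "L \<inter> {0<..} = L" using assms(3) by (auto intro: gr0I)
  have "(SUP n\<in>L. ereal (real n)) = ereal (real (Max L))"
    using assms(1,2) by (intro antisym SUP_least SUP_upper) auto
  moreover have "Min L > 0" using Min_in[OF assms(1,2)] assms(3) by (metis gr0I)
  ultimately show ?thesis
    using assms(1,2) by (simp add: rho_def L cInf_eq_Min)
qed

lemma LM_replicate_XY:
  assumes "0 < k" "0 < l"
  shows "LM (replicate k X @ replicate l Y) = {k + l .. 2 * (k + l) - 1}"
proof -
  let ?w = "replicate k X @ replicate l Y"
  have pot: "potential ?w = 2 * (k + l) - 1"
    using weight_replicate_XY[OF assms] assms by (simp add: potential_def)
  have "count_list (replicate n c) c = n" for n and c :: letter by (induction n) auto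
  then have "count_list ?w X + count_list ?w Y = k + l" by simp
  then have "LM ?w \<subseteq> {k + l .. 2 * (k + l) - 1}"
    using LM_le_potential count_XY_le_LM pot by fastforce
  moreover have "{k + l .. 2 * (k + l) - 1} \<subseteq> LM ?w"
    using length_potential_interval_subset_LM[of ?w] pot by simp
  ultimately show ?thesis by blast
qed

lemma rho_LM_replicate_XY:
  assumes "0 < k" "0 < l"
  shows "rho (LM (replicate k X @ replicate l Y)) = ereal (2 - 1 / real (k + l))"
proof -
  let ?L = "{k + l .. 2 * (k + l) - 1}"
  have "Max ?L = 2 * (k + l) - 1" "Min ?L = k + l" using assms by (simp_all add: Max_eq_iff Min_eq_iff)
  then have "rho ?L = ereal (real (2 * (k + l) - 1) / real (k + l))"
    using rho_eq_Max_div_Min[of ?L] assms by simp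
  also have "real (2 * (k + l) - 1) / real (k + l) = 2 - 1 / real (k + l)"
    using assms by (simp add: of_nat_diff field_simps)
  finally show ?thesis using LM_replicate_XY[OF assms] by simp
qed

lemma rho_LM_le:
  assumes "a \<noteq> []"
  shows "rho (LM a) \<le> ereal (2 - 1 / real (length a))"
proof -
  let ?L = "LM a"
  define m where "m = Min ?L"
  have ne: "?L \<noteq> {}" using length_in_LM by blast
  have m: "m \<in> ?L" using finite_LM ne by (simp add: m_def)
  have zero: "0 \<notin> ?L" using potential_le_LM[of 0 a] assms by (auto simp: potential_def)
  then have m0: "0 < m" using m by (metis gr0I)
  have "Max ?L \<le> potential a" using Max_in[OF finite_LM ne] by (rule LM_le_potential)
  also have "\<dots> \<le> 2 * m - 1" using m by (rule potential_le_LM)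
  finally have "real (Max ?L) / real m \<le> real (2 * m - 1) / real m"
    by (simp add: divide_right_mono)
  also have "\<dots> = 2 - 1 / real m" using m0 by (simp add: of_nat_diff field_simps)
  also have "\<dots> \<le> 2 - 1 / real (length a)"
    using m0 finite_LM length_in_LM by (simp add: m_def frac_le)
  finally show ?thesis using rho_eq_Max_div_Min[OF finite_LM ne zero] by (simp add: m_def)
qed

theorem lemma6p2:
  shows "(\<forall>k l. 0 < k \<longrightarrow> 0 < l \<longrightarrow>
            LM (replicate k X @ replicate l Y) = {k + l .. 2 * (k + l) - 1})
       \<and> (\<forall>k l. 0 < k \<longrightarrow> 0 < l \<longrightarrow>
            rho (LM (replicate k X @ replicate l Y)) = ereal (2 - 1 / real (k + l)))
       \<and> (\<forall>n k l (a::word). 2 \<le> n \<longrightarrow> 0 < k \<longrightarrow> 0 < l \<longrightarrow> k + l = n \<longrightarrow>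
            length a = n \<longrightarrow>
            rho (LM a) \<le> rho (LM (replicate k X @ replicate l Y)))"
proof (intro conjI allI impI)
  fix n k l and a :: word
  assume "2 \<le> n" "0 < k" "0 < l" "k + l = n" "length a = n"
  moreover from this have "a \<noteq> []" by auto
  ultimately show "rho (LM a) \<le> rho (LM (replicate k X @ replicate l Y))"
    using rho_LM_le[of a] rho_LM_replicate_XY[of k l] by auto
qed (rule LM_replicate_XY rho_LM_replicate_XY, assumption+)+

end
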